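(* Let $\Gamma,T,\ast$, $W$ and the rewriting system be as in the context. Let $c$ be a redundant $1$-cell of $\mathcal{UD}^n\Gamma$, written $c=\{c_1,\dots,c_{n-2},v,e\}$ where $v$ is the smallest unblocked vertex of $c$ and $e$ is the unique edge of $c$. Let $c'=\{c_1,\dots,c_{n-2},\tau(e(v)),e\}$. If $$(\tau(e(v)),v)\cap\{c_1,\dots,c_{n-2},\iota(e),\tau(e)\}=\emptyset,$$ then $c\stackrel{*}{\to}c'$ in the string rewriting system of $\mathcal{MP}_{W,T_W}$, where $c$ and $c'$ are regarded as words of length one in the oriented $1$-cells.
   Context: $\Gamma$ is a finite connected graph and $n\ge1$; $d(v)$ is the degree. $\mathcal{UD}^n\Gamma$ is the cell complex whose cells are unordered $n$-element sets $c=\{c_1,\dots,c_n\}$ where each $c_i$ is a vertex or an edge of $\Gamma$ and the closed sets $c_i$ are pairwise disjoint; dimension = number of edges; faces are obtained by replacing edges by endpoints. Fix a maximal tree $T$ of $\Gamma$ and a vertex $\ast$ of degree $1$ in $T$. For vertices $v_1,v_2$, $v_1\wedge v_2$ is the endpoint other than $\ast$ of $[\ast,v_1]\cap[\ast,v_2]$ (geodesics in $T$), or $\ast$ if this is $\{\ast\}$. Directions (edges) at each vertex $v$ are labelled $0,\dots,d(v)-1$, label $0$ for the edge of $T$ towards $\ast$ (the direction from $\ast$ in $T$ gets label $1$); $g(v_1,v_2)$ is the label of the direction from $v_1$ on the $T$-geodesic to $v_2$, $g(v,v)=0$. Order: $v_1\le v_2$ iff, with $v_3=v_1\wedge v_2$,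 $v_3=v_1$ or ($v_3\ne v_1$ and $g(v_3,v_1)<g(v_3,v_2)$). For vertices $u<u'$, $(u,u')$ denotes the set of vertices $u''$ with $u<u''<u'$. For an edge $e$, $\iota(e)\ge\tau(e)$ are its endpoints; for $v\ne\ast$, $e(v)$ is the edge of $T$ at $v$ in direction $0$. A vertex $v\neq\ast$ of a cell $c$ is unblocked if $e(v)$ is disjoint from every element of $c$ other than $v$ (then the elementary reduction from $v$ replaces $v$ by $e(v)$); otherwise, and always for $v=\ast$, blocked. The principal reduction of $c$ is the elementary reduction from its smallest unblocked vertex. $W(c)$ is the principal reduction of $c$ when it exists and $c$ is not itself in the image of $W$ (on cells of one lower dimension); otherwise undefined. Cells in the domain of $W$ are redundant, in the image collapsible, otherwise critical. $W$ is a discrete gradient vector field with a unique critical $0$-cell, and $T_W$ denotes the maximal tree of $\mathcal{UD}^n\Gamma$ formed by the collapsible $1$-cells. Orientation: the $1$-cell $\{c_1,\dots,c_{n-1},e\}$ is oriented from $\{c_1,\dots,c_{n-1},\iota(e)\}$ to $\{c_1,\dots,c_{n-1},\tau(e)\}$. For an oriented $1$-cell $f$, $\overline f$ is the reverse, and for a word $w=f_1\cdots f_m$, $\overline w=\overline{f_m}\cdots\overline{f_1}$. The monoid presentation $\mathcal{MP}_{W,T_W}$ has alphabet all oriented $1$-cells and relations: $(f,1),(\overline f,1)$ for $f$ in $T_W$; $(f\overline f,1),(\overline ff,1)$ for all $f$; and for each collapsible $2$-cell $C=W(f)$ with a chosen boundary word $fw$ (read along the attaching map), $(f,\overline w)$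 and $(\overline f,w)$. Its string rewriting system has moves $ur_1v\to ur_2v$ for relations $(r_1,r_2)$ and words $u,v$; $\stackrel{*}{\to}$ is the reflexive transitive closure of $\to$. *)

theory Defs
  imports Main
begin

record ('v,'e) gdata =
  verts :: "'v set"
  edges :: "'e set"
  endp  :: "'e \<Rightarrow> 'v set"
  tree  :: "'e set"
  base  :: "'v"
  lab   :: "'v \<Rightarrow> 'e \<Rightarrow> nat"

definition inc :: "('v,'e) gdata \<Rightarrow> 'v \<Rightarrow> 'e set" where
  "inc G v = {e \<in> edges G. v \<in> endp G e}"

definition deg :: "('v,'e) gdata \<Rightarrow> 'v \<Rightarrow> nat" where
  "deg G v = card (inc G v)"

definition tpath_ok :: "('v,'e) gdata \<Rightarrow> 'v list \<Rightarrow> bool" where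
  "tpath_ok G xs \<longleftrightarrow> xs \<noteq> [] \<and> distinct xs \<and> set xs \<subseteq> verts G \<and>
     (\<forall>i. Suc i < length xs \<longrightarrow> (\<exists>e\<in>tree G. endp G e = {xs ! i, xs ! Suc i}))"

definition spanning_tree :: "('v,'e) gdata \<Rightarrow> bool" where
  "spanning_tree G \<longleftrightarrow> tree G \<subseteq> edges G \<and>
     (\<forall>e1\<in>tree G. \<forall>e2\<in>tree G. endp G e1 = endp G e2 \<longrightarrow> e1 = e2) \<and>
     (\<forall>v\<in>verts G. \<forall>w\<in>verts G. \<exists>!xs. tpath_ok G xs \<and> hd xs = v \<and> last xs = w)"

definition tp :: "('v,'e) gdata \<Rightarrow> 'v \<Rightarrow> 'v \<Rightarrow> 'v list" where
  "tp G v w = (THE xs. tpath_ok G xs \<and> hd xs = v \<and> last xs = w)"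

definition geod :: "('v,'e) gdata \<Rightarrow> 'v \<Rightarrow> 'v \<Rightarrow> 'v set" where
  "geod G v w = set (tp G v w)"

definition tedge :: "('v,'e) gdata \<Rightarrow> 'v \<Rightarrow> 'v \<Rightarrow> 'e" where
  "tedge G a b = (THE e. e \<in> tree G \<and> endp G e = {a, b})"

text \<open>e(v): the tree edge at v in direction 0 (towards the base vertex).\<close>
definition eT :: "('v,'e) gdata \<Rightarrow> 'v \<Rightarrow> 'e" where
  "eT G v = tedge G v (tp G v (base G) ! 1)"

definition valid :: "('v,'e) gdata \<Rightarrow> bool" where
  "valid G \<longleftrightarrow> finite (verts G) \<and> finite (edges G) \<and>
     (\<forall>e\<in>edges G. endp G e \<subseteq> verts G \<and> card (endp G e) = 2) \<and>
     spanning_tree G \<and>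
     base G \<in> verts G \<and> card {e \<in> tree G. base G \<in> endp G e} = 1 \<and>
     (\<forall>v\<in>verts G. bij_betw (lab G v) (inc G v) {..<deg G v}) \<and>
     (\<forall>v\<in>verts G. v \<noteq> base G \<longrightarrow> lab G v (eT G v) = 0) \<and>
     (\<forall>e\<in>tree G. base G \<in> endp G e \<longrightarrow> deg G (base G) \<ge> 2 \<longrightarrow> lab G (base G) e = 1)"

definition meet :: "('v,'e) gdata \<Rightarrow> 'v \<Rightarrow> 'v \<Rightarrow> 'v" where
  "meet G v1 v2 = (THE u. u \<in> geod G (base G) v1 \<inter> geod G (base G) v2 \<and>
       geod G (base G) v1 \<inter> geod G (base G) v2 = geod G (base G) u)"

definition gdir :: "('v,'e) gdata \<Rightarrow> 'v \<Rightarrow> 'v \<Rightarrow> nat" where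
  "gdir G v1 v2 = (if v1 = v2 then 0 else lab G v1 (tedge G v1 (tp G v1 v2 ! 1)))"

definition vle :: "('v,'e) gdata \<Rightarrow> 'v \<Rightarrow> 'v \<Rightarrow> bool" where
  "vle G v1 v2 = (let v3 = meet G v1 v2 in
      v3 = v1 \<or> (v3 \<noteq> v1 \<and> gdir G v3 v1 < gdir G v3 v2))"

definition vless :: "('v,'e) gdata \<Rightarrow> 'v \<Rightarrow> 'v \<Rightarrow> bool" where
  "vless G v1 v2 \<longleftrightarrow> vle G v1 v2 \<and> v1 \<noteq> v2"

definition vint :: "('v,'e) gdata \<Rightarrow> 'v \<Rightarrow> 'v \<Rightarrow> 'v set" where
  "vint G u u' = {w \<in> verts G. vless G u w \<and> vless G w u'}"

definition iota :: "('v,'e) gdata \<Rightarrow> 'e \<Rightarrow> 'v" where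
  "iota G e = (THE x. x \<in> endp G e \<and> (\<forall>y\<in>endp G e. vle G y x))"

definition tau :: "('v,'e) gdata \<Rightarrow> 'e \<Rightarrow> 'v" where
  "tau G e = (THE x. x \<in> endp G e \<and> (\<forall>y\<in>endp G e. vle G x y))"

datatype ('v,'e) elt = Vtx 'v | Edg 'e

type_synonym ('v,'e) cell = "('v,'e) elt set"

fun clos :: "('v,'e) gdata \<Rightarrow> ('v,'e) elt \<Rightarrow> 'v set" where
  "clos G (Vtx v) = {v}"
| "clos G (Edg e) = endp G e"

fun in_graph :: "('v,'e) gdata \<Rightarrow> ('v,'e) elt \<Rightarrow> bool" where
  "in_graph G (Vtx v) = (v \<in> verts G)"
| "in_graph G (Edg e) = (e \<in> edges G)"

definition cells :: "('v,'e) gdata \<Rightarrow> nat \<Rightarrow> ('v,'e) cell set" where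
  "cells G n = {c. finite c \<and> card c = n \<and> (\<forall>x\<in>c. in_graph G x) \<and>
      (\<forall>x\<in>c. \<forall>y\<in>c. x \<noteq> y \<longrightarrow> clos G x \<inter> clos G y = {})}"

definition dim :: "('v,'e) cell \<Rightarrow> nat" where
  "dim c = card {e. Edg e \<in> c}"

definition unblocked :: "('v,'e) gdata \<Rightarrow> ('v,'e) cell \<Rightarrow> 'v \<Rightarrow> bool" where
  "unblocked G c v \<longleftrightarrow> Vtx v \<in> c \<and> v \<noteq> base G \<and>
     (\<forall>x\<in>c. x \<noteq> Vtx v \<longrightarrow> endp G (eT G v) \<inter> clos G x = {})"

definition has_pr :: "('v,'e) gdata \<Rightarrow> ('v,'e) cell \<Rightarrow> bool" where
  "has_pr G c \<longleftrightarrow> (\<exists>v. unblocked G c v)"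

definition min_unblocked :: "('v,'e) gdata \<Rightarrow> ('v,'e) cell \<Rightarrow> 'v" where
  "min_unblocked G c = (THE v. unblocked G c v \<and> (\<forall>u. unblocked G c u \<longrightarrow> vle G v u))"

definition elred :: "('v,'e) gdata \<Rightarrow> ('v,'e) cell \<Rightarrow> 'v \<Rightarrow> ('v,'e) cell" where
  "elred G c v = insert (Edg (eT G v)) (c - {Vtx v})"

definition pr :: "('v,'e) gdata \<Rightarrow> ('v,'e) cell \<Rightarrow> ('v,'e) cell" where
  "pr G c = elred G c (min_unblocked G c)"

fun redset :: "('v,'e) gdata \<Rightarrow> nat \<Rightarrow> nat \<Rightarrow> ('v,'e) cell set" where
  "redset G n 0 = {c \<in> cells G n. dim c = 0 \<and> has_pr G c}"
| "redset G n (Suc k) = {c \<in> cells G n. dim c = Suc k \<and> has_pr G c \<and> c \<notin> pr G ` redset G n k}"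

definition redundant :: "('v,'e) gdata \<Rightarrow> nat \<Rightarrow> ('v,'e) cell \<Rightarrow> bool" where
  "redundant G n c \<longleftrightarrow> c \<in> redset G n (dim c)"

definition collapsible :: "('v,'e) gdata \<Rightarrow> nat \<Rightarrow> ('v,'e) cell \<Rightarrow> bool" where
  "collapsible G n c \<longleftrightarrow> c \<in> cells G n \<and> 0 < dim c \<and> c \<in> pr G ` redset G n (dim c - 1)"

definition W :: "('v,'e) gdata \<Rightarrow> ('v,'e) cell \<Rightarrow> ('v,'e) cell" where
  "W G c = pr G c"

text \<open>Oriented 1-cells: (f, True) is f with its standard orientation
  (from iota to tau), (f, False) is the reverse.\<close>
type_synonym ('v,'e) ocell = "('v,'e) cell \<times> bool"

definition orev :: "('v,'e) ocell \<Rightarrow> ('v,'e) ocell" where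
  "orev f = (fst f, \<not> snd f)"

definition wrev :: "('v,'e) ocell list \<Rightarrow> ('v,'e) ocell list" where
  "wrev w = rev (map orev w)"

definition edge_of :: "('v,'e) cell \<Rightarrow> 'e" where
  "edge_of f = (THE e. Edg e \<in> f)"

text \<open>For a redundant 1-cell f with C = W f, the boundary word of C read along
  the attaching map starting with f (positively): f w.  Here f = R + {a, e2},
  C = R + {e1, e2} with e1 = e(a), and a' is the other endpoint of e1.\<close>
definition bword :: "('v,'e) gdata \<Rightarrow> ('v,'e) cell \<Rightarrow> ('v,'e) ocell list" where
  "bword G f = (let a = min_unblocked G f; e1 = eT G a; e2 = edge_of f;
       a' = (THE x. x \<in> endp G e1 \<and> x \<noteq> a);
       R = f - {Vtx a, Edg e2} in
     [ (R \<union> {Edg e1, Vtx (tau G e2)}, a = iota G e1),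
       (R \<union> {Vtx a', Edg e2}, False),
       (R \<union> {Edg e1, Vtx (iota G e2)}, a' = iota G e1) ])"

definition one_cells :: "('v,'e) gdata \<Rightarrow> nat \<Rightarrow> ('v,'e) cell set" where
  "one_cells G n = {f \<in> cells G n. dim f = 1}"

definition TW :: "('v,'e) gdata \<Rightarrow> nat \<Rightarrow> ('v,'e) cell set" where
  "TW G n = {f \<in> one_cells G n. collapsible G n f}"

definition rels :: "('v,'e) gdata \<Rightarrow> nat \<Rightarrow> (('v,'e) ocell list \<times> ('v,'e) ocell list) set" where
  "rels G n =
     {([(f, b)], []) | f b. f \<in> TW G n}
   \<union> {([(f, b), (f, \<not> b)], []) | f b. f \<in> one_cells G n}
   \<union> {([(f, True)], wrev (bword G f)) | f. f \<in> one_cells G n \<and> redundant G n f}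
   \<union> {([(f, False)], bword G f) | f. f \<in> one_cells G n \<and> redundant G n f}"

definition rw_step :: "('v,'e) gdata \<Rightarrow> nat \<Rightarrow> ('v,'e) ocell list \<Rightarrow> ('v,'e) ocell list \<Rightarrow> bool" where
  "rw_step G n x y \<longleftrightarrow> (\<exists>u v l r. (l, r) \<in> rels G n \<and> x = u @ l @ v \<and> y = u @ r @ v)"

end

theory Submission
  imports Defs "HOL-Library.List_Lexorder"
begin

text \<open>
  The relation of the collapsible 2-cell W(c) rewrites c into the word h(\<iota> e) c' h(\<tau> e)\<inverse>,
  where h(y) = c - {v, e} + {e(v), y}.  The only edge of h(y) is the tree edge e(v), and by the
  hypothesis no vertex of h(y) lies strictly between \<tau>(e(v)) and v.  So it suffices that every
  such interval-free 1-cell f = S + {e(w)} rewrites to the empty word.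

  Replace e(w) by w to get the 0-cell x = S + {w}, and let m be its smallest unblocked vertex; the
  principal reduction of x from m is collapsible.  If m = w this reduction is f itself.  Otherwise m
  is the principal vertex of f as well, and unless f is collapsible its boundary word consists of
  the reduction of x and of two interval-free 1-cells in which one vertex of x has been moved to
  its parent.  Induction on the total depth of the vertices of x finishes the argument.

  The order on vertices is handled through addresses: it is the lexicographic order of the label
  sequences along the tree geodesics from the base vertex.
\<close>

lemma tpath_ok_rev: "tpath_ok G xs \<Longrightarrow> tpath_ok G (rev xs)"
  unfolding tpath_ok_def
proof (intro conjI allI impI)
  fix i assume h: "xs \<noteq> [] \<and> distinct xs \<and> set xs \<subseteq> verts G \<and>
     (\<forall>i. Suc i < length xs \<longrightarrow> (\<exists>e\<in>tree G. endp G e = {xs ! i, xs ! Suc i}))"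
    and i: "Suc i < length (rev xs)"
  let ?j = "length xs - Suc (Suc i)"
  have "Suc ?j < length xs" using i by simp
  then obtain e where "e \<in> tree G" "endp G e = {xs ! ?j, xs ! Suc ?j}" using h by blast
  moreover have "rev xs ! i = xs ! Suc ?j" "rev xs ! Suc i = xs ! ?j" using i
    by (auto simp: rev_nth Suc_diff_Suc)
  ultimately show "\<exists>e\<in>tree G. endp G e = {rev xs ! i, rev xs ! Suc i}"
    by (auto simp: insert_commute)
qed auto

lemma tpath_ok_drop: "tpath_ok G xs \<Longrightarrow> i < length xs \<Longrightarrow> tpath_ok G (drop i xs)"
  unfolding tpath_ok_def by (auto dest: in_set_dropD)

lemma tpath_ok_take: "tpath_ok G xs \<Longrightarrow> 0 < i \<Longrightarrow> tpath_ok G (take i xs)"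
  unfolding tpath_ok_def by (auto dest: in_set_takeD)

lemma prefix_of_snoc_iff: "(\<exists>r. xs @ [x] = ys @ r) \<longleftrightarrow> ys = xs @ [x] \<or> (\<exists>r. xs = ys @ r)"
proof
  assume "\<exists>r. xs @ [x] = ys @ r"
  then obtain r where r: "xs @ [x] = ys @ r" by blast
  show "ys = xs @ [x] \<or> (\<exists>r. xs = ys @ r)"
    using r by (cases r rule: rev_exhaust) auto
qed auto

lemma prefix_of_longer_prefix:
  assumes "xs = a @ r" "xs = u @ s" "length a \<le> length u" shows "\<exists>t. u = a @ t"
proof -
  obtain us where "(a = u @ us \<and> us @ r = s) \<or> (a @ us = u \<and> r = us @ s)"
    using assms(1,2) append_eq_append_conv2[of a r u s] by auto
  thus ?thesis using assms(3) by auto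
qed

lemma list_less_append: "r \<noteq> [] \<Longrightarrow> (xs :: 'a :: linorder list) < xs @ r"
  by (induction xs) (auto simp: neq_Nil_conv)

lemma list_le_append: "(xs :: 'a :: linorder list) \<le> xs @ r"
  using list_less_append[of r xs] by (cases "r = []") auto

lemma list_le_append_Cons_iff:
  "(x :: 'a :: linorder) \<noteq> y \<Longrightarrow> (K @ x # r1 \<le> K @ y # r2) \<longleftrightarrow> x < y"
  by (induction K) (auto simp: le_less)

lemma list_between_append_singleton:
  "(K :: 'a :: linorder list) < Z \<Longrightarrow> Z < K @ [k] \<Longrightarrow> \<exists>j r. Z = K @ j # r \<and> j < k"
proof (induction K arbitrary: Z)
  case Nil
  then obtain z r where "Z = z # r" by (cases Z) auto
  then show ?case using Nil by auto
next
  case (Cons a K)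
  then obtain z r where Z: "Z = z # r" by (cases Z) auto
  then have "z = a" "K < r" "r < K @ [k]" using Cons.prems by auto
  then show ?case using Cons.IH Z by auto
qed

lemma list_append_Cons_between:
  "(j :: 'a :: linorder) < k \<Longrightarrow> K < K @ j # r \<and> K @ j # r < K @ [k]"
  by (induction K) auto

lemma dim_one_remove_edge:
  assumes "dim c = 1" "Edg e \<in> c" shows "c - {Edg e} \<subseteq> range Vtx"
proof
  fix y assume y: "y \<in> c - {Edg e}"
  obtain x where x: "{e. Edg e \<in> c} = {x}" using assms(1) by (auto simp: dim_def card_1_singleton_iff)
  show "y \<in> range Vtx"
  proof (cases y)
    case (Edg e')
    have "e' \<in> {e. Edg e \<in> c}" "e \<in> {e. Edg e \<in> c}" using y Edg assms(2) by simp_all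
    hence "e' = e" unfolding x by simp
    then show ?thesis using y Edg by simp
  qed simp
qed

lemma edge_of_eq:
  assumes "dim c = 1" "Edg e \<in> c" shows "edge_of c = e"
  unfolding edge_of_def
proof (rule the_equality)
  fix e' assume e': "Edg e' \<in> c"
  show "e' = e"
  proof (rule ccontr)
    assume "e' \<noteq> e"
    then have "Edg e' \<in> range Vtx" using e' dim_one_remove_edge[OF assms] by blast
    then show False by auto
  qed
qed (rule assms(2))

lemma unblocked_face:
  assumes "unblocked G f u" "Edg e \<in> f" "y \<in> endp G e"
  shows "unblocked G (insert (Vtx y) (f - {Edg e})) u"
  using assms unfolding unblocked_def by fastforce

lemma finite_vertices_of_cell: "c \<in> cells G n \<Longrightarrow> finite (Vtx -` c)"
  by (auto simp: cells_def intro: finite_vimageI inj_onI)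

lemma rw_step_in_context: "rw_step G n x y \<Longrightarrow> rw_step G n (u @ x @ v) (u @ y @ v)"
  unfolding rw_step_def by (metis append.assoc)

lemma rw_steps_in_context:
  "(rw_step G n)\<^sup>*\<^sup>* x y \<Longrightarrow> (rw_step G n)\<^sup>*\<^sup>* (u @ x @ v) (u @ y @ v)"
  by (induction rule: rtranclp_induct) (auto intro: rtranclp.rtrancl_into_rtrancl rw_step_in_context)

lemma rels_rw_steps: "(l, r) \<in> rels G n \<Longrightarrow> (rw_step G n)\<^sup>*\<^sup>* l r"
  unfolding rw_step_def by (intro r_into_rtranclp) (metis append.left_neutral append_Nil2)

definition erasable :: "('v,'e) gdata \<Rightarrow> nat \<Rightarrow> ('v,'e) cell \<Rightarrow> bool" where
  "erasable G n f \<longleftrightarrow> (\<forall>b. (rw_step G n)\<^sup>*\<^sup>* [(f, b)] [])"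

lemma erasable_word_rw_steps_Nil:
  "\<forall>x\<in>set w. erasable G n (fst x) \<Longrightarrow> (rw_step G n)\<^sup>*\<^sup>* w []"
proof (induction w)
  case (Cons x w)
  have "(rw_step G n)\<^sup>*\<^sup>* ([] @ [x] @ w) ([] @ [] @ w)"
    using Cons.prems rw_steps_in_context[of G n "[x]" "[]" "[]" w]
    by (cases x) (auto simp: erasable_def)
  then have "(rw_step G n)\<^sup>*\<^sup>* (x # w) w" by simp
  moreover have "(rw_step G n)\<^sup>*\<^sup>* w []" using Cons by simp
  ultimately show ?case by (rule rtranclp_trans)
qed simp

lemma rw_steps_erase_around:
  assumes "\<forall>x\<in>set p \<union> set q. erasable G n (fst x)"
  shows "(rw_step G n)\<^sup>*\<^sup>* (p @ w @ q) w"
proof -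
  have "(rw_step G n)\<^sup>*\<^sup>* ([] @ p @ (w @ q)) ([] @ [] @ (w @ q))"
    using assms by (intro rw_steps_in_context erasable_word_rw_steps_Nil) auto
  moreover have "(rw_step G n)\<^sup>*\<^sup>* (w @ q @ []) (w @ [] @ [])"
    using assms by (intro rw_steps_in_context erasable_word_rw_steps_Nil) auto
  ultimately show ?thesis using rtranclp_trans by fastforce
qed

lemma collapsible_erasable: "f \<in> TW G n \<Longrightarrow> erasable G n f"
  unfolding erasable_def by (auto intro: rels_rw_steps simp: rels_def)

lemma redundant_erasable:
  assumes "f \<in> one_cells G n" "redundant G n f"
    and "\<forall>g\<in>fst ` set (bword G f). erasable G n g"
  shows "erasable G n f"
  unfolding erasable_def
proof
  fix b
  have "([(f, b)], if b then wrev (bword G f) else bword G f) \<in> rels G n"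
    using assms(1,2) by (cases b) (auto simp: rels_def)
  moreover have "(rw_step G n)\<^sup>*\<^sup>* (if b then wrev (bword G f) else bword G f) []"
    using assms(3) by (intro erasable_word_rw_steps_Nil) (auto simp: wrev_def orev_def)
  ultimately show "(rw_step G n)\<^sup>*\<^sup>* [(f, b)] []"
    using rels_rw_steps rtranclp_trans by metis
qed

section \<open>Paths to the base vertex and addresses\<close>

locale valid_graph =
  fixes G :: "('v,'e) gdata"
  assumes valid: "valid G"
begin

lemma base_in_verts: "base G \<in> verts G"
  using valid by (simp add: valid_def)

lemma endp_edge: "e \<in> edges G \<Longrightarrow> endp G e \<subseteq> verts G \<and> card (endp G e) = 2"
  using valid by (simp add: valid_def)

lemma spanning_tree: "spanning_tree G"
  using valid by (simp add: valid_def)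

lemma tp_spec:
  assumes "v \<in> verts G" "w \<in> verts G"
  shows "tpath_ok G (tp G v w) \<and> hd (tp G v w) = v \<and> last (tp G v w) = w"
proof -
  have "\<exists>!xs. tpath_ok G xs \<and> hd xs = v \<and> last xs = w"
    using spanning_tree assms unfolding spanning_tree_def by blast
  then show ?thesis unfolding tp_def by (rule theI')
qed

lemma tp_eqI:
  assumes "tpath_ok G xs" "hd xs = v" "last xs = w"
  shows "tp G v w = xs"
proof -
  have "xs \<noteq> []" "set xs \<subseteq> verts G" using assms(1) by (auto simp: tpath_ok_def)
  hence "v \<in> verts G" "w \<in> verts G" using assms by auto
  hence "\<exists>!xs. tpath_ok G xs \<and> hd xs = v \<and> last xs = w"
    using spanning_tree unfolding spanning_tree_def by blast
  then show ?thesis unfolding tp_def using assms by (intro the1_equality) auto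
qed

lemma tedge_eqI: "e \<in> tree G \<Longrightarrow> endp G e = {a, b} \<Longrightarrow> tedge G a b = e"
  unfolding tedge_def
  by (rule the_equality) (use spanning_tree in \<open>auto simp: spanning_tree_def\<close>)

definition root_path :: "'v \<Rightarrow> 'v list" where
  "root_path v = tp G v (base G)"

definition parent :: "'v \<Rightarrow> 'v" where
  "parent v = root_path v ! 1"

definition depth :: "'v \<Rightarrow> nat" where
  "depth v = length (root_path v)"

definition child_lab :: "'v \<Rightarrow> nat" where
  "child_lab v = lab G (parent v) (eT G v)"

definition address :: "'v \<Rightarrow> nat list" where
  "address v = map child_lab (rev (butlast (root_path v)))"

lemma root_path_spec:
  "v \<in> verts G \<Longrightarrow> tpath_ok G (root_path v) \<and> hd (root_path v) = v \<and> last (root_path v) = base G"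
  unfolding root_path_def using tp_spec base_in_verts by blast

lemma root_path_eqI:
  "tpath_ok G xs \<Longrightarrow> hd xs = v \<Longrightarrow> last xs = base G \<Longrightarrow> root_path v = xs"
  unfolding root_path_def by (rule tp_eqI)

lemma root_path_simple:
  "v \<in> verts G \<Longrightarrow> root_path v \<noteq> [] \<and> distinct (root_path v) \<and> set (root_path v) \<subseteq> verts G"
  using root_path_spec unfolding tpath_ok_def by blast

lemma self_in_root_path: "v \<in> verts G \<Longrightarrow> v \<in> set (root_path v)"
  using root_path_spec root_path_simple by (metis list.set_sel(1))

lemma base_in_root_path: "v \<in> verts G \<Longrightarrow> base G \<in> set (root_path v)"
  using root_path_spec root_path_simple by (metis last_in_set)

lemma root_path_in_verts: "v \<in> verts G \<Longrightarrow> a \<in> set (root_path v) \<Longrightarrow> a \<in> verts G"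
  using root_path_simple by blast

lemma root_path_base: "root_path (base G) = [base G]"
  using base_in_verts by (intro root_path_eqI) (auto simp: tpath_ok_def)

lemma length_root_path_ge_2:
  assumes "v \<in> verts G" "v \<noteq> base G" shows "2 \<le> length (root_path v)"
proof -
  have "root_path v \<noteq> []" "hd (root_path v) = v" "last (root_path v) = base G"
    using root_path_spec root_path_simple assms by auto
  thus ?thesis using assms(2)
    by (cases "root_path v") (auto split: if_splits simp: Suc_le_eq)
qed

lemma root_path_Cons:
  assumes "v \<in> verts G" "v \<noteq> base G"
  shows "root_path v = v # root_path (parent v)"
proof -
  have l: "2 \<le> length (root_path v)" by (rule length_root_path_ge_2[OF assms])
  have p: "tpath_ok G (root_path v)" "hd (root_path v) = v" "last (root_path v) = base G"
    using root_path_spec assms by auto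
  have "root_path (parent v) = drop 1 (root_path v)"
    using tpath_ok_drop[OF p(1)] l p(3)
    by (intro root_path_eqI) (auto simp: parent_def hd_drop_conv_nth)
  thus ?thesis using p l by (cases "root_path v") auto
qed

lemma parent_in_verts:
  assumes "v \<in> verts G" "v \<noteq> base G" shows "parent v \<in> verts G"
proof -
  have "parent v \<in> set (root_path v)"
    using length_root_path_ge_2[OF assms] unfolding parent_def by (intro nth_mem) simp
  thus ?thesis using root_path_in_verts assms(1) by blast
qed

lemma parent_neq:
  assumes "v \<in> verts G" "v \<noteq> base G" shows "parent v \<noteq> v"
proof -
  have "distinct (v # root_path (parent v))"
    using root_path_simple[OF assms(1)] by (simp only: root_path_Cons[OF assms, symmetric])
  thus ?thesis using self_in_root_path[OF parent_in_verts[OF assms]] by auto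
qed

lemma depth_parent_less: "v \<in> verts G \<Longrightarrow> v \<noteq> base G \<Longrightarrow> depth (parent v) < depth v"
  unfolding depth_def by (subst (2) root_path_Cons) auto

lemma eT_tree_edge:
  assumes "v \<in> verts G" "v \<noteq> base G"
  shows "eT G v \<in> tree G \<and> endp G (eT G v) = {v, parent v}"
proof -
  have l: "2 \<le> length (root_path v)" by (rule length_root_path_ge_2[OF assms])
  have p: "tpath_ok G (root_path v)" "hd (root_path v) = v" using root_path_spec assms by auto
  obtain e where e: "e \<in> tree G" "endp G e = {root_path v ! 0, root_path v ! Suc 0}"
    using p(1) l unfolding tpath_ok_def by force
  have "root_path v ! 0 = v" using p l by (cases "root_path v") auto
  hence "endp G e = {v, parent v}" using e by (simp add: parent_def)
  moreover have "eT G v = tedge G v (parent v)" by (simp add: eT_def parent_def root_path_def)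
  ultimately show ?thesis using tedge_eqI e by simp
qed

lemma eT_in_edges: "v \<in> verts G \<Longrightarrow> v \<noteq> base G \<Longrightarrow> eT G v \<in> edges G"
  using eT_tree_edge spanning_tree by (auto simp: spanning_tree_def)

lemma address_base: "address (base G) = []"
  by (simp add: address_def root_path_base)

lemma address_parent:
  assumes "v \<in> verts G" "v \<noteq> base G"
  shows "address v = address (parent v) @ [child_lab v]"
proof -
  have "root_path (parent v) \<noteq> []" using root_path_simple parent_in_verts assms by blast
  thus ?thesis unfolding address_def using root_path_Cons[OF assms] by simp
qed

lemma address_parent_less:
  assumes "v \<in> verts G" "v \<noteq> base G" shows "address (parent v) < address v"
  using address_parent[OF assms] list_less_append[of "[child_lab v]"] by simp

lemma address_inj: "v \<in> verts G \<Longrightarrow> w \<in> verts G \<Longrightarrow> address v = address w \<Longrightarrow> v = w"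
proof (induction "depth v" arbitrary: v w rule: less_induct)
  case less
  show ?case
  proof (cases "v = base G")
    case True
    then show ?thesis using less address_base address_parent by (metis append_is_Nil_conv not_Cons_self2)
  next
    case False
    hence wb: "w \<noteq> base G" using less address_base address_parent by (metis append_is_Nil_conv not_Cons_self2)
    have k: "address (parent v) @ [child_lab v] = address (parent w) @ [child_lab w]"
      using address_parent[OF less(2) False] address_parent[OF less(3) wb] less(4) by simp
    have pp: "parent v = parent w"
      using less(1)[OF depth_parent_less[OF less(2) False] parent_in_verts[OF less(2) False]
          parent_in_verts[OF less(3) wb]] k
      by simp
    have "eT G v \<in> inc G (parent v)" "eT G w \<in> inc G (parent v)"
      using eT_tree_edge[OF less(2) False] eT_tree_edge[OF less(3) wb] eT_in_edges less False wb pp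
      by (auto simp: inc_def)
    moreover have "inj_on (lab G (parent v)) (inc G (parent v))"
      using valid parent_in_verts[OF less(2) False] by (auto simp: valid_def bij_betw_def)
    moreover have "lab G (parent v) (eT G v) = lab G (parent v) (eT G w)"
      using k pp by (simp add: child_lab_def)
    ultimately have "eT G v = eT G w" by (meson inj_on_def)
    hence "{v, parent v} = {w, parent v}"
      using eT_tree_edge[OF less(2) False] eT_tree_edge[OF less(3) wb] pp by simp
    thus ?thesis using parent_neq[OF less(2) False] by (auto simp: doubleton_eq_iff)
  qed
qed

lemma ancestor_iff_address_prefix:
  "v \<in> verts G \<Longrightarrow> a \<in> verts G \<Longrightarrow> a \<in> set (root_path v) \<longleftrightarrow> (\<exists>r. address v = address a @ r)"
proof (induction "depth v" arbitrary: v rule: less_induct)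
  case less
  show ?case
  proof (cases "v = base G")
    case True
    have "(\<exists>r. address v = address a @ r) \<longleftrightarrow> address a = []" using True address_base by simp
    also have "\<dots> \<longleftrightarrow> a = base G"
      using address_base address_parent less by (metis append_is_Nil_conv not_Cons_self2)
    finally show ?thesis using True root_path_base by auto
  next
    case False
    have pv: "parent v \<in> verts G" using parent_in_verts less False by blast
    have "a \<in> set (root_path v) \<longleftrightarrow> a = v \<or> a \<in> set (root_path (parent v))"
      using root_path_Cons[OF less(2) False] by simp
    also have "\<dots> \<longleftrightarrow> address a = address v \<or> (\<exists>r. address (parent v) = address a @ r)"
      using less(1)[OF depth_parent_less[OF less(2) False] pv] address_inj less by blast
    also have "\<dots> \<longleftrightarrow> (\<exists>r. address v = address a @ r)"
      using prefix_of_snoc_iff[of "address (parent v)" "child_lab v" "address a"]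
        address_parent[OF less(2) False] by auto
    finally show ?thesis .
  qed
qed

lemma ancestor_with_address:
  "v \<in> verts G \<Longrightarrow> address v = p @ r \<Longrightarrow> \<exists>a\<in>set (root_path v). address a = p"
proof (induction "depth v" arbitrary: v r rule: less_induct)
  case less
  show ?case
  proof (cases r rule: rev_exhaust)
    case Nil
    then show ?thesis using less self_in_root_path by auto
  next
    case (snoc r' y)
    have F: "v \<noteq> base G" using less snoc address_base by auto
    have "address (parent v) = p @ r'" using address_parent[OF less(2) F] less(3) snoc by simp
    then obtain a where "a \<in> set (root_path (parent v))" "address a = p"
      using less(1)[OF depth_parent_less[OF less(2) F] parent_in_verts[OF less(2) F]] by blast
    then show ?thesis using root_path_Cons[OF less(2) F] by auto
  qed
qed

lemma geod_base: "v \<in> verts G \<Longrightarrow> geod G (base G) v = set (root_path v)"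
proof -
  assume v: "v \<in> verts G"
  have "tp G (base G) v = rev (root_path v)"
    using root_path_spec[OF v] root_path_simple[OF v]
    by (intro tp_eqI) (auto intro: tpath_ok_rev simp: hd_rev last_rev)
  thus ?thesis by (simp add: geod_def)
qed

lemma gdir_ancestor:
  assumes v: "v \<in> verts G" and a: "a \<in> set (root_path v)" and av: "a \<noteq> v"
  shows "gdir G a v = address v ! length (address a)"
proof -
  define L where "L = root_path v"
  have Lp: "tpath_ok G L" "hd L = v" "last L = base G" "L \<noteq> []"
    using root_path_spec[OF v] root_path_simple[OF v] by (auto simp: L_def)
  obtain j where j: "j < length L" "L ! j = a" using a by (auto simp: L_def in_set_conv_nth)
  have L0: "L ! 0 = v" using Lp by (cases L) auto
  have j0: "j \<noteq> 0" using j(2) L0 av by (cases j) auto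
  define P where "P = rev (take (Suc j) L)"
  have "tpath_ok G P" unfolding P_def by (intro tpath_ok_rev tpath_ok_take Lp) simp
  moreover have "hd P = a" using j j0 by (simp add: P_def hd_rev take_Suc_conv_app_nth)
  moreover have "last P = v" using j Lp L0 by (simp add: P_def last_rev hd_take hd_conv_nth)
  ultimately have tpav: "tp G a v = P" by (intro tp_eqI)
  \<comment> \<open>c is the child of a on the way to v\<close>
  define c where "c = L ! (j - 1)"
  have P1: "P ! 1 = c" using j j0 by (simp add: P_def c_def rev_nth)
  have upc: "root_path c = drop (j - 1) L"
    using j Lp tpath_ok_drop[OF Lp(1), of "j - 1"]
    by (intro root_path_eqI) (auto simp: c_def hd_drop_conv_nth)
  have cv: "c \<in> verts G"
    using Lp j unfolding c_def tpath_ok_def by (meson less_imp_diff_less nth_mem subsetD)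
  have "2 \<le> length (root_path c)" using upc j j0 by simp
  hence cb: "c \<noteq> base G" using root_path_base by auto
  have pc: "parent c = a" using upc j j0 by (simp add: parent_def)
  have "tedge G a c = eT G c" using eT_tree_edge[OF cv cb] pc
    by (intro tedge_eqI) (auto simp: insert_commute)
  hence g: "gdir G a v = child_lab c" using av tpav P1 pc by (simp add: gdir_def child_lab_def)
  have "c \<in> set L" using j unfolding c_def by simp
  then obtain r where "address v = address c @ r"
    using ancestor_iff_address_prefix[OF v cv] by (auto simp: L_def)
  thus ?thesis using g address_parent[OF cv cb] pc by simp
qed

section \<open>The order on vertices\<close>

lemma common_ancestors_root_path:
  assumes v1: "v1 \<in> verts G" and v2: "v2 \<in> verts G"
  obtains u where "u \<in> verts G" "set (root_path v1) \<inter> set (root_path v2) = set (root_path u)"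
proof -
  define I where "I = set (root_path v1) \<inter> set (root_path v2)"
  have ne: "I \<noteq> {}" using base_in_root_path v1 v2 unfolding I_def by blast
  have Iv: "I \<subseteq> verts G" unfolding I_def using root_path_in_verts v1 by blast
  obtain u where u: "u \<in> I" and umax: "\<forall>a\<in>I. length (address a) \<le> length (address u)"
  proof -
    let ?M = "Max ((\<lambda>a. length (address a)) ` I)"
    have fin: "finite ((\<lambda>a. length (address a)) ` I)" unfolding I_def by simp
    have "?M \<in> (\<lambda>a. length (address a)) ` I" using fin ne by (intro Max_in) auto
    then obtain u where "u \<in> I" "length (address u) = ?M" by auto
    thus ?thesis using that fin by auto
  qed
  have uv: "u \<in> verts G" using u Iv by blast
  obtain s1 where s1: "address v1 = address u @ s1"
    using u ancestor_iff_address_prefix v1 uv unfolding I_def by blast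
  have "I = set (root_path u)"
  proof
    show "I \<subseteq> set (root_path u)"
    proof
      fix a assume a: "a \<in> I"
      hence av: "a \<in> verts G" using Iv by blast
      obtain r where "address v1 = address a @ r"
        using a ancestor_iff_address_prefix v1 av unfolding I_def by blast
      then obtain t where "address u = address a @ t"
        using prefix_of_longer_prefix s1 umax a by blast
      thus "a \<in> set (root_path u)" using ancestor_iff_address_prefix uv av by blast
    qed
  next
    show "set (root_path u) \<subseteq> I"
    proof
      fix a assume a: "a \<in> set (root_path u)"
      hence av: "a \<in> verts G" using root_path_in_verts uv by blast
      obtain t where "address u = address a @ t" using a ancestor_iff_address_prefix uv av by blast
      moreover obtain s2 where "address v2 = address u @ s2"
        using u ancestor_iff_address_prefix v2 uv unfolding I_def by blast
      ultimately show "a \<in> I"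
        unfolding I_def using s1 ancestor_iff_address_prefix v1 v2 av by (metis append.assoc IntI)
    qed
  qed
  then show ?thesis using that uv unfolding I_def by blast
qed

lemma meet_spec:
  assumes v1: "v1 \<in> verts G" and v2: "v2 \<in> verts G"
  shows "meet G v1 v2 \<in> set (root_path v1) \<inter> set (root_path v2) \<and>
         set (root_path v1) \<inter> set (root_path v2) = set (root_path (meet G v1 v2))"
proof -
  obtain u where uv: "u \<in> verts G"
    and common: "set (root_path v1) \<inter> set (root_path v2) = set (root_path u)"
    using common_ancestors_root_path[OF v1 v2] by blast
  have "meet G v1 v2 = u"
    unfolding meet_def geod_base[OF v1] geod_base[OF v2]
  proof (rule the_equality)
    show "u \<in> set (root_path v1) \<inter> set (root_path v2) \<and>
      set (root_path v1) \<inter> set (root_path v2) = geod G (base G) u"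
      using common geod_base[OF uv] self_in_root_path[OF uv] by simp
  next
    fix x assume x: "x \<in> set (root_path v1) \<inter> set (root_path v2) \<and>
      set (root_path v1) \<inter> set (root_path v2) = geod G (base G) x"
    hence xv: "x \<in> verts G" using root_path_in_verts v1 by blast
    have "x \<in> set (root_path u)" "u \<in> set (root_path x)"
      using x common geod_base[OF xv] self_in_root_path[OF uv] by auto
    then obtain t1 t2 where "address u = address x @ t1" "address x = address u @ t2"
      using ancestor_iff_address_prefix xv uv by blast
    thus "x = u" using address_inj[OF xv uv] by simp
  qed
  thus ?thesis using common self_in_root_path[OF uv] by simp
qed

text \<open>Otherwise the child of the meet towards v1 would be a common ancestor deeper than the meet.\<close>
lemma meet_branches_differ:
  assumes v1: "v1 \<in> verts G" and v2: "v2 \<in> verts G"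
    and r1: "address v1 = address (meet G v1 v2) @ x # s1"
    and r2: "address v2 = address (meet G v1 v2) @ y # s2"
  shows "x \<noteq> y"
proof
  assume "x = y"
  define u where "u = meet G v1 v2"
  have common: "set (root_path v1) \<inter> set (root_path v2) = set (root_path u)"
    and uv: "u \<in> verts G"
    using meet_spec[OF v1 v2] root_path_in_verts[OF v1] unfolding u_def by auto
  obtain a where a: "a \<in> set (root_path v1)" "address a = address u @ [x]"
    using ancestor_with_address[OF v1, of "address u @ [x]" s1] r1 by (auto simp: u_def)
  have av: "a \<in> verts G" using a root_path_in_verts v1 by blast
  have "address v2 = address a @ s2" using a r2 \<open>x = y\<close> by (simp add: u_def)
  hence "a \<in> set (root_path u)"
    using ancestor_iff_address_prefix[OF v2 av] a common by blast
  then obtain t where "address u = address a @ t"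
    using ancestor_iff_address_prefix uv av by blast
  thus False using a by simp
qed

lemma vle_iff_address_le:
  assumes v1: "v1 \<in> verts G" and v2: "v2 \<in> verts G"
  shows "vle G v1 v2 \<longleftrightarrow> address v1 \<le> address v2"
proof -
  define u where "u = meet G v1 v2"
  have u1: "u \<in> set (root_path v1)" and u2: "u \<in> set (root_path v2)"
    using meet_spec[OF v1 v2] unfolding u_def by auto
  have uv: "u \<in> verts G" using u1 root_path_in_verts v1 by blast
  obtain r1 r2 where r: "address v1 = address u @ r1" "address v2 = address u @ r2"
    using ancestor_iff_address_prefix[OF v1 uv] ancestor_iff_address_prefix[OF v2 uv] u1 u2 by blast
  have vle_u: "vle G v1 v2 \<longleftrightarrow> (u = v1 \<or> (u \<noteq> v1 \<and> gdir G u v1 < gdir G u v2))"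
    unfolding vle_def Let_def u_def by simp
  show ?thesis
  proof (cases "u = v1")
    case True
    then show ?thesis using r(2) list_le_append vle_u by simp
  next
    case F1: False
    have r1: "r1 \<noteq> []" using F1 r address_inj[OF uv v1] by auto
    show ?thesis
    proof (cases "u = v2")
      case True
      have "address v2 < address v1" using r(1) True list_less_append[OF r1] by simp
      moreover have "\<not> vle G v1 v2" using vle_u F1 True by (simp add: gdir_def)
      ultimately show ?thesis by simp
    next
      case F2: False
      have r2: "r2 \<noteq> []" using F2 r address_inj[OF uv v2] by auto
      obtain x s1 y s2 where xy: "r1 = x # s1" "r2 = y # s2"
        using r1 r2 by (auto simp: neq_Nil_conv)
      have g1: "gdir G u v1 = x" using gdir_ancestor[OF v1 u1 F1] r(1) xy(1) by simp
      have g2: "gdir G u v2 = y" using gdir_ancestor[OF v2 u2 F2] r(2) xy(2) by simp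
      have "x \<noteq> y" using meet_branches_differ[OF v1 v2] r xy by (simp add: u_def)
      hence "address v1 \<le> address v2 \<longleftrightarrow> x < y" using r xy list_le_append_Cons_iff by simp
      then show ?thesis using vle_u F1 g1 g2 by simp
    qed
  qed
qed

lemma vless_iff_address_less:
  assumes "v1 \<in> verts G" "v2 \<in> verts G"
  shows "vless G v1 v2 \<longleftrightarrow> address v1 < address v2"
  using vle_iff_address_le[OF assms] address_inj[OF assms]
  by (auto simp: vless_def less_le)

lemma vint_eq_address_interval:
  assumes "a \<in> verts G" "b \<in> verts G"
  shows "vint G a b = {w \<in> verts G. address a < address w \<and> address w < address b}"
  using vless_iff_address_less assms unfolding vint_def by blast

lemma vle_antisym: "v1 \<in> verts G \<Longrightarrow> v2 \<in> verts G \<Longrightarrow> vle G v1 v2 \<Longrightarrow> vle G v2 v1 \<Longrightarrow> v1 = v2"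
  using vle_iff_address_le address_inj by force

lemma iota_tau_eqI:
  assumes "endp G e = {a, b}" "a \<in> verts G" "b \<in> verts G" "vle G a b"
  shows "iota G e = b \<and> tau G e = a"
proof -
  have "vle G a a" "vle G b b" using assms(2,3) vle_iff_address_le by auto
  then show ?thesis unfolding iota_def tau_def
    using assms vle_antisym by (intro conjI the_equality) auto
qed

lemma iota_tau_eT:
  assumes "v \<in> verts G" "v \<noteq> base G"
  shows "iota G (eT G v) = v \<and> tau G (eT G v) = parent v"
proof -
  have "vle G (parent v) v"
    using vle_iff_address_le address_parent_less assms parent_in_verts by (simp add: less_imp_le)
  thus ?thesis using iota_tau_eqI[of "eT G v" "parent v" v] eT_tree_edge[OF assms]
      parent_in_verts[OF assms] assms by (auto simp: insert_commute)
qed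

lemma iota_tau_in_endp:
  assumes "e \<in> edges G" shows "iota G e \<in> endp G e \<and> tau G e \<in> endp G e"
proof -
  obtain a b where ab: "endp G e = {a, b}" "a \<in> verts G" "b \<in> verts G"
    using endp_edge[OF assms] by (auto simp: card_2_iff)
  show ?thesis
  proof (cases "vle G a b")
    case True then show ?thesis using iota_tau_eqI ab by auto
  next
    case False
    hence "vle G b a" using vle_iff_address_le ab by auto
    then show ?thesis using iota_tau_eqI[of e b a] ab by (auto simp: insert_commute)
  qed
qed

lemma parent_of_vertex_in_parent_interval:
  assumes m: "m \<in> verts G" "m \<noteq> base G" and z: "z \<in> vint G (parent m) m"
  shows "z \<noteq> base G \<and> (parent z = parent m \<or> parent z \<in> vint G (parent m) m)"
proof -
  have pm: "parent m \<in> verts G" using parent_in_verts[OF m] .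
  have zk: "z \<in> verts G" "address (parent m) < address z" "address z < address m"
    using z vint_eq_address_interval[OF pm m(1)] by auto
  obtain j r where jr: "address z = address (parent m) @ j # r" "j < child_lab m"
    using list_between_append_singleton zk address_parent[OF m] by metis
  have zb: "z \<noteq> base G" using jr address_base by auto
  have kz: "address z = address (parent z) @ [child_lab z]" using address_parent[OF zk(1) zb] .
  have pz: "parent z \<in> verts G" using parent_in_verts[OF zk(1) zb] .
  show ?thesis
  proof (cases r rule: rev_exhaust)
    case Nil
    hence "address (parent z) = address (parent m)" using jr kz by simp
    then show ?thesis using address_inj[OF pz pm] zb by blast
  next
    case (snoc r' y)
    hence "address (parent z) = address (parent m) @ j # r'" using jr kz by simp
    hence "parent z \<in> vint G (parent m) m"
      using list_append_Cons_between[OF jr(2)] vint_eq_address_interval[OF pm m(1)]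
        address_parent[OF m] pz by simp
    then show ?thesis using zb by blast
  qed
qed

lemma child_in_parent_interval:
  assumes a: "a \<in> verts G" "a \<noteq> base G" and b: "b \<in> verts G" "b \<noteq> base G"
    and pb: "parent b \<in> vint G (parent a) a"
  shows "b \<in> vint G (parent a) a"
proof -
  have pa: "parent a \<in> verts G" using parent_in_verts[OF a] .
  have "address (parent a) < address (parent b)" "address (parent b) < address a"
    using pb vint_eq_address_interval[OF pa a(1)] by auto
  then obtain j r where jr: "address (parent b) = address (parent a) @ j # r" "j < child_lab a"
    using list_between_append_singleton address_parent[OF a] by metis
  have "address b = address (parent a) @ j # (r @ [child_lab b])"
    using address_parent[OF b] jr by simp
  thus ?thesis
    using list_append_Cons_between[OF jr(2)] vint_eq_address_interval[OF pa a(1)] address_parent[OF a] b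
    by simp
qed

section \<open>Cells and the gradient vector field\<close>

lemma elred_in_cells:
  assumes c: "c \<in> cells G n" and u: "unblocked G c u"
  shows "elred G c u \<in> cells G n"
proof -
  have uc: "Vtx u \<in> c" "u \<noteq> base G" "\<forall>x\<in>c. x \<noteq> Vtx u \<longrightarrow> endp G (eT G u) \<inter> clos G x = {}"
    using u by (auto simp: unblocked_def)
  have uv: "u \<in> verts G" using c uc(1) by (fastforce simp: cells_def)
  have ue: "u \<in> endp G (eT G u)" using eT_tree_edge[OF uv uc(2)] by simp
  have "Edg (eT G u) \<notin> c - {Vtx u}" using uc(3) ue by fastforce
  moreover have "finite c" "card c = n" using c by (auto simp: cells_def)
  then have "card (c - {Vtx u}) = n - 1" "n \<ge> 1" using uc(1) by (auto simp: Suc_le_eq card_gt_0_iff)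
  ultimately show ?thesis
    using c uc(3) eT_in_edges[OF uv uc(2)] by (auto simp: cells_def elred_def)
qed

lemma face_in_cells:
  assumes c: "c \<in> cells G n" and e: "Edg e \<in> c" and y: "y \<in> endp G e"
  shows "insert (Vtx y) (c - {Edg e}) \<in> cells G n"
proof -
  have "e \<in> edges G" using c e by (fastforce simp: cells_def)
  hence yv: "y \<in> verts G" using endp_edge y by blast
  have dis: "\<forall>x\<in>c - {Edg e}. clos G x \<inter> endp G e = {}" using c e by (fastforce simp: cells_def)
  have "Vtx y \<notin> c - {Edg e}"
  proof
    assume "Vtx y \<in> c - {Edg e}"
    then have "clos G (Vtx y) \<inter> endp G e = {}" using dis by blast
    then show False using y by simp
  qed
  moreover have "finite c" "card c = n" using c by (auto simp: cells_def)
  then have "card (c - {Edg e}) = n - 1" "n \<ge> 1" using e by (auto simp: Suc_le_eq card_gt_0_iff)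
  ultimately show ?thesis using c dis y yv by (auto simp: cells_def)
qed

lemma exists_min_unblocked:
  assumes c: "c \<in> cells G n" and w: "unblocked G c w"
  obtains m where "unblocked G c m" "\<forall>u. unblocked G c u \<longrightarrow> vle G m u"
proof -
  define U where "U = {u. unblocked G c u}"
  have "U \<subseteq> Vtx -` c" "finite (Vtx -` c)"
    using finite_vertices_of_cell[OF c] by (auto simp: U_def unblocked_def)
  hence "finite (address ` U)" by (metis finite_imageI finite_subset)
  moreover have "address ` U \<noteq> {}" using w by (auto simp: U_def)
  ultimately have "Min (address ` U) \<in> address ` U" by (rule Min_in)
  then obtain m where m: "m \<in> U" "address m = Min (address ` U)" by auto
  have Uv: "U \<subseteq> verts G" using c by (fastforce simp: U_def unblocked_def cells_def)
  have "\<forall>u\<in>U. vle G m u"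
  proof
    fix u assume u: "u \<in> U"
    then have "address m \<le> address u" using m(2) \<open>finite (address ` U)\<close> by simp
    then show "vle G m u" using Uv m(1) u vle_iff_address_le by blast
  qed
  then show ?thesis using that m(1) by (auto simp: U_def)
qed

lemma min_unblocked_eqI:
  assumes c: "c \<in> cells G n"
    and m: "unblocked G c m" and min: "\<forall>u. unblocked G c u \<longrightarrow> vle G m u"
  shows "min_unblocked G c = m"
  unfolding min_unblocked_def
proof (rule the_equality)
  fix v assume v: "unblocked G c v \<and> (\<forall>u. unblocked G c u \<longrightarrow> vle G v u)"
  have "\<And>u. unblocked G c u \<Longrightarrow> u \<in> verts G" using c by (fastforce simp: unblocked_def cells_def)
  then show "v = m" using m min v vle_antisym by blast
qed (use m min in blast)

section \<open>Erasing 1-cells whose edge is a tree edge\<close>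

lemma bword_eq:
  assumes "min_unblocked G f = a" "a \<in> verts G" "a \<noteq> base G" "edge_of f = e"
  shows "bword G f =
    [(f - {Vtx a, Edg e} \<union> {Edg (eT G a), Vtx (tau G e)}, True),
     (f - {Vtx a, Edg e} \<union> {Vtx (parent a), Edg e}, False),
     (f - {Vtx a, Edg e} \<union> {Edg (eT G a), Vtx (iota G e)}, False)]"
proof -
  have "(THE x. x \<in> endp G (eT G a) \<and> x \<noteq> a) = parent a"
    using eT_tree_edge[OF assms(2,3)] parent_neq[OF assms(2,3)] by (intro the_equality) auto
  then show ?thesis using iota_tau_eT[OF assms(2,3)] parent_neq[OF assms(2,3)] assms(1,4)
    by (simp add: bword_def Let_def)
qed

lemma vertex_cell_principal_reduction_collapsible:
  assumes xc: "x \<in> cells G n" and xV: "x \<subseteq> range Vtx"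
    and m: "unblocked G x m" and min: "\<forall>u. unblocked G x u \<longrightarrow> vle G m u"
  shows "elred G x m \<in> TW G n"
proof -
  have "{e. Edg e \<in> x} = {}" using xV by auto
  hence "x \<in> redset G n 0" using xc m by (auto simp: has_pr_def dim_def)
  moreover have "pr G x = elred G x m" using min_unblocked_eqI[OF xc m min] by (simp add: pr_def)
  moreover have "{e. Edg e \<in> elred G x m} = {eT G m}" using xV by (auto simp: elred_def)
  ultimately show ?thesis using elred_in_cells[OF xc m]
    by (auto simp: TW_def one_cells_def collapsible_def dim_def)
qed

text \<open>A vertex of x in the interval of minimal depth would be unblocked, since its parent lies
  in the interval as well or is the parent of m; yet it precedes m.\<close>
lemma min_unblocked_interval_free:
  assumes xc: "x \<in> cells G n" and xV: "x \<subseteq> range Vtx"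
    and m: "unblocked G x m" and min: "\<forall>u. unblocked G x u \<longrightarrow> vle G m u"
  shows "Vtx -` x \<inter> vint G (parent m) m = {}"
proof (rule ccontr)
  define Z where "Z = Vtx -` x \<inter> vint G (parent m) m"
  assume "Z \<noteq> {}"
  then obtain z where z: "z \<in> Z" and z_least: "\<forall>y. y \<in> Z \<longrightarrow> depth z \<le> depth y"
    using ex_has_least_nat[of "\<lambda>z. z \<in> Z" _ depth] by blast
  have mv: "m \<in> verts G" "m \<noteq> base G" using m xc by (fastforce simp: unblocked_def cells_def)+
  have pm: "Vtx (parent m) \<notin> x"
    using m eT_tree_edge[OF mv] parent_neq[OF mv] by (fastforce simp: unblocked_def)
  have zi: "z \<in> vint G (parent m) m" "Vtx z \<in> x" using z by (auto simp: Z_def)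
  have zv: "z \<in> verts G" using zi by (simp add: vint_def)
  have pz: "z \<noteq> base G \<and> (parent z = parent m \<or> parent z \<in> vint G (parent m) m)"
    by (rule parent_of_vertex_in_parent_interval[OF mv zi(1)])
  have "Vtx (parent z) \<notin> x"
  proof
    assume "Vtx (parent z) \<in> x"
    then have "parent z \<in> Z" using pz pm by (auto simp: Z_def)
    then show False using z_least depth_parent_less[OF zv] pz by fastforce
  qed
  then have "unblocked G x z"
    using zi(2) pz xV eT_tree_edge[OF zv] by (fastforce simp: unblocked_def)
  then have "address m \<le> address z" using min vle_iff_address_le[OF mv(1) zv] by blast
  moreover have "address z < address m"
    using zi(1) vint_eq_address_interval[OF parent_in_verts[OF mv] mv(1)] by simp
  ultimately show False by simp
qed

lemma sum_depth_replace_by_parent_less: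
  assumes "finite A" "b \<in> A" "b \<in> verts G" "b \<noteq> base G" "parent b \<notin> A"
  shows "sum depth (insert (parent b) (A - {b})) < sum depth A"
proof -
  have "sum depth (insert (parent b) (A - {b})) = depth (parent b) + sum depth (A - {b})"
    using assms by simp
  also have "\<dots> < depth b + sum depth (A - {b})" using depth_parent_less assms by simp
  also have "\<dots> = sum depth A" using assms by (simp add: sum.remove)
  finally show ?thesis .
qed

lemma interval_free_insert_parent:
  assumes "A \<inter> vint G (parent a) a = {}" "b \<in> A" "B \<subseteq> insert (parent b) A"
    and "a \<in> verts G" "a \<noteq> base G" "b \<in> verts G" "b \<noteq> base G"
  shows "B \<inter> vint G (parent a) a = {}"
  using assms child_in_parent_interval by blast

text \<open>The 1-cells S + {e(w)} of the proof idea; note that parent w = \<tau>(e(w)) (lemma iota_tau_eT).\<close>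
definition interval_free_cell :: "nat \<Rightarrow> ('v,'e) cell \<Rightarrow> 'v \<Rightarrow> bool" where
  "interval_free_cell n S w \<longleftrightarrow> S \<subseteq> range Vtx \<and> w \<in> verts G \<and> w \<noteq> base G \<and>
     insert (Edg (eT G w)) S \<in> cells G n \<and> Vtx -` S \<inter> vint G (parent w) w = {}"

lemma interval_free_cell_vertex_face:
  assumes "interval_free_cell n S w"
  shows "Vtx w \<notin> S" "Vtx (parent w) \<notin> S"
    and "insert (Vtx w) S \<in> cells G n" "unblocked G (insert (Vtx w) S) w"
proof -
  have S: "S \<subseteq> range Vtx" and w: "w \<in> verts G" "w \<noteq> base G"
    and fc: "insert (Edg (eT G w)) S \<in> cells G n"
    using assms by (simp_all add: interval_free_cell_def)
  have eTw: "endp G (eT G w) = {w, parent w}" using eT_tree_edge[OF w] by simp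
  have far: "Vtx z \<in> S \<Longrightarrow> z \<notin> {w, parent w}" for z using fc S eTw by (fastforce simp: cells_def)
  then show "Vtx w \<notin> S" "Vtx (parent w) \<notin> S" by auto
  have "insert (Vtx w) (insert (Edg (eT G w)) S - {Edg (eT G w)}) \<in> cells G n"
    by (rule face_in_cells[OF fc]) (simp_all add: eTw)
  moreover have "insert (Edg (eT G w)) S - {Edg (eT G w)} = S" using S by auto
  ultimately show "insert (Vtx w) S \<in> cells G n" by simp
  show "unblocked G (insert (Vtx w) S) w" using w S far eTw by (fastforce simp: unblocked_def)
qed

lemma interval_free_cell_min_unblocked:
  assumes adm: "interval_free_cell n S w"
    and m: "unblocked G (insert (Vtx w) S) m"
    and min: "\<forall>u. unblocked G (insert (Vtx w) S) u \<longrightarrow> vle G m u"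
    and "m \<noteq> w"
  shows "unblocked G (insert (Edg (eT G w)) S) m \<and> min_unblocked G (insert (Edg (eT G w)) S) = m"
proof -
  define f where "f = insert (Edg (eT G w)) S"
  have S: "S \<subseteq> range Vtx" and w: "w \<in> verts G" "w \<noteq> base G" and fc: "f \<in> cells G n"
    and free: "Vtx -` S \<inter> vint G (parent w) w = {}"
    using adm by (simp_all add: interval_free_cell_def f_def)
  have mS: "Vtx m \<in> S" using m \<open>m \<noteq> w\<close> by (simp add: unblocked_def)
  have mv: "m \<in> verts G" "m \<noteq> base G" using m fc mS by (fastforce simp: unblocked_def cells_def f_def)+
  have eTw: "endp G (eT G w) = {w, parent w}" and eTm: "endp G (eT G m) = {m, parent m}"
    using eT_tree_edge[OF w] eT_tree_edge[OF mv] by simp_all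
  have "m \<noteq> parent w" using mS interval_free_cell_vertex_face(2)[OF adm] by auto
  moreover have "w \<notin> {m, parent m}" using m eTm \<open>m \<noteq> w\<close> by (fastforce simp: unblocked_def)
  moreover have "parent m \<noteq> parent w"
  proof
    assume pp: "parent m = parent w"
    have "address m < address w"
      using min interval_free_cell_vertex_face(4)[OF adm] \<open>m \<noteq> w\<close>
        vless_iff_address_less[OF mv(1) w(1)] by (auto simp: vless_def)
    then have "m \<in> vint G (parent w) w"
      using address_parent_less[OF mv] pp vint_eq_address_interval[OF parent_in_verts[OF w] w(1)] mv
      by simp
    then show False using free mS by blast
  qed
  ultimately have "endp G (eT G m) \<inter> endp G (eT G w) = {}" using eTw eTm \<open>m \<noteq> w\<close> by auto
  then have ub: "unblocked G f m" using m mS by (auto simp: unblocked_def f_def)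
  have "insert (Vtx w) (f - {Edg (eT G w)}) = insert (Vtx w) S" using S by (auto simp: f_def)
  then have "\<forall>u. unblocked G f u \<longrightarrow> vle G m u"
    using min unblocked_face[of G f _ "eT G w" w] eTw by (auto simp: f_def)
  then show ?thesis using ub min_unblocked_eqI[OF fc] by (simp add: f_def)
qed

lemma tree_edge_cell_boundary_in_cells:
  assumes S: "S \<subseteq> range Vtx" and w: "w \<in> verts G" "w \<noteq> base G"
    and fc: "insert (Edg (eT G w)) S \<in> cells G n"
    and ub: "unblocked G (insert (Edg (eT G w)) S) m"
  shows "insert (Edg (eT G m)) (insert (Vtx (parent w)) (S - {Vtx m})) \<in> cells G n"
    and "insert (Edg (eT G w)) (insert (Vtx (parent m)) (S - {Vtx m})) \<in> cells G n"
proof -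
  define W2 where "W2 = elred G (insert (Edg (eT G w)) S) m"
  have W2c: "W2 \<in> cells G n" unfolding W2_def using elred_in_cells[OF fc ub] .
  have mv: "m \<in> verts G" "m \<noteq> base G" using ub fc by (fastforce simp: unblocked_def cells_def)+
  have eTw: "endp G (eT G w) = {w, parent w}" and eTm: "endp G (eT G m) = {m, parent m}"
    using eT_tree_edge[OF w] eT_tree_edge[OF mv] by simp_all
  have "eT G m \<noteq> eT G w" using ub eTm eTw by (auto simp: unblocked_def)
  then have W2_eq: "W2 = insert (Edg (eT G m)) (insert (Edg (eT G w)) (S - {Vtx m}))"
    by (auto simp: W2_def elred_def)
  have "insert (Vtx (parent w)) (W2 - {Edg (eT G w)}) \<in> cells G n"
    using face_in_cells[OF W2c, of "eT G w" "parent w"] W2_eq eTw by simp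
  moreover have "insert (Vtx (parent m)) (W2 - {Edg (eT G m)}) \<in> cells G n"
    using face_in_cells[OF W2c, of "eT G m" "parent m"] W2_eq eTm by simp
  moreover have "Edg (eT G w) \<notin> S" "Edg (eT G m) \<notin> S" using S by auto
  ultimately show "insert (Edg (eT G m)) (insert (Vtx (parent w)) (S - {Vtx m})) \<in> cells G n"
    and "insert (Edg (eT G w)) (insert (Vtx (parent m)) (S - {Vtx m})) \<in> cells G n"
    using \<open>eT G m \<noteq> eT G w\<close> W2_eq by (auto simp: insert_commute insert_Diff_if)
qed

lemma interval_free_cell_boundary:
  assumes adm: "interval_free_cell n S w"
    and m: "unblocked G (insert (Vtx w) S) m"
    and min: "\<forall>u. unblocked G (insert (Vtx w) S) u \<longrightarrow> vle G m u"
    and "m \<noteq> w"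
  shows "interval_free_cell n (insert (Vtx (parent w)) (S - {Vtx m})) m"
    and "interval_free_cell n (insert (Vtx (parent m)) (S - {Vtx m})) w"
proof -
  have S: "S \<subseteq> range Vtx" and w: "w \<in> verts G" "w \<noteq> base G"
    and fc: "insert (Edg (eT G w)) S \<in> cells G n" and free: "Vtx -` S \<inter> vint G (parent w) w = {}"
    using adm by (simp_all add: interval_free_cell_def)
  have xc: "insert (Vtx w) S \<in> cells G n" using interval_free_cell_vertex_face[OF adm] by simp
  have mS: "m \<in> Vtx -` S" using m \<open>m \<noteq> w\<close> by (simp add: unblocked_def)
  have mv: "m \<in> verts G" "m \<noteq> base G" using m xc by (fastforce simp: unblocked_def cells_def)+
  have ub: "unblocked G (insert (Edg (eT G w)) S) m"
    using interval_free_cell_min_unblocked[OF assms] by simp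
  have "Vtx -` insert (Vtx w) S \<inter> vint G (parent m) m = {}"
    using min_unblocked_interval_free[OF xc _ m min] S by simp
  then have "Vtx -` insert (Vtx (parent w)) (S - {Vtx m}) \<inter> vint G (parent m) m = {}"
    by (rule interval_free_insert_parent[of _ m w]) (use mv w in auto)
  moreover have "Vtx -` insert (Vtx (parent m)) (S - {Vtx m}) \<inter> vint G (parent w) w = {}"
    by (rule interval_free_insert_parent[OF free mS]) (use mv w in auto)
  ultimately show "interval_free_cell n (insert (Vtx (parent w)) (S - {Vtx m})) m"
    and "interval_free_cell n (insert (Vtx (parent m)) (S - {Vtx m})) w"
    using tree_edge_cell_boundary_in_cells[OF S w fc ub] S mv w
    by (auto simp: interval_free_cell_def)
qed

lemma interval_free_cell_boundary_depth_less:
  assumes adm: "interval_free_cell n S w"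
    and m: "unblocked G (insert (Vtx w) S) m"
    and "m \<noteq> w"
  shows "sum depth (insert m (Vtx -` insert (Vtx (parent w)) (S - {Vtx m})))
      < sum depth (insert w (Vtx -` S))"
    and "sum depth (insert w (Vtx -` insert (Vtx (parent m)) (S - {Vtx m})))
      < sum depth (insert w (Vtx -` S))"
proof -
  define A where "A = Vtx -` insert (Vtx w) S"
  have A: "insert w (Vtx -` S) = A" by (auto simp: A_def)
  have w: "w \<in> verts G" "w \<noteq> base G" using adm by (simp_all add: interval_free_cell_def)
  note face = interval_free_cell_vertex_face[OF adm]
  have fin: "finite A" using finite_vertices_of_cell[OF face(3)] by (simp add: A_def)
  have mS: "Vtx m \<in> S" using m \<open>m \<noteq> w\<close> by (simp add: unblocked_def)
  have mv: "m \<in> verts G" "m \<noteq> base G" using m face(3) by (fastforce simp: unblocked_def cells_def)+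
  have pm: "parent m \<notin> A"
    using m eT_tree_edge[OF mv] parent_neq[OF mv] by (fastforce simp: unblocked_def A_def)
  have "insert m (Vtx -` insert (Vtx (parent w)) (S - {Vtx m})) = insert (parent w) (A - {w})"
    using mS face(1,2) by (auto simp: A_def)
  moreover have "sum depth (insert (parent w) (A - {w})) < sum depth A"
    using fin w face(1,2) parent_neq[OF w]
    by (intro sum_depth_replace_by_parent_less) (auto simp: A_def)
  ultimately show "sum depth (insert m (Vtx -` insert (Vtx (parent w)) (S - {Vtx m})))
      < sum depth (insert w (Vtx -` S))"
    unfolding A by simp
  have "insert w (Vtx -` insert (Vtx (parent m)) (S - {Vtx m})) = insert (parent m) (A - {m})"
    using \<open>m \<noteq> w\<close> by (auto simp: A_def)
  moreover have "sum depth (insert (parent m) (A - {m})) < sum depth A"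
    using fin mv mS pm by (intro sum_depth_replace_by_parent_less) (auto simp: A_def)
  ultimately show "sum depth (insert w (Vtx -` insert (Vtx (parent m)) (S - {Vtx m})))
      < sum depth (insert w (Vtx -` S))"
    unfolding A by simp
qed

lemma interval_free_cell_dim: "interval_free_cell n S w \<Longrightarrow> dim (insert (Edg (eT G w)) S) = 1"
proof -
  assume "interval_free_cell n S w"
  then have "{e. Edg e \<in> insert (Edg (eT G w)) S} = {eT G w}" by (auto simp: interval_free_cell_def)
  then show ?thesis by (simp add: dim_def)
qed

lemma interval_free_cell_bword:
  assumes adm: "interval_free_cell n S w"
    and m: "unblocked G (insert (Vtx w) S) m"
    and min: "\<forall>u. unblocked G (insert (Vtx w) S) u \<longrightarrow> vle G m u"
    and "m \<noteq> w"
  shows "bword G (insert (Edg (eT G w)) S) =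
    [(insert (Edg (eT G m)) (insert (Vtx (parent w)) (S - {Vtx m})), True),
     (insert (Edg (eT G w)) (insert (Vtx (parent m)) (S - {Vtx m})), False),
     (elred G (insert (Vtx w) S) m, False)]"
proof -
  define f where "f = insert (Edg (eT G w)) S"
  define R where "R = S - {Vtx m}"
  have S: "S \<subseteq> range Vtx" and w: "w \<in> verts G" "w \<noteq> base G"
    using adm by (simp_all add: interval_free_cell_def)
  have mv: "m \<in> verts G" "m \<noteq> base G"
    using m interval_free_cell_vertex_face(3)[OF adm] by (fastforce simp: unblocked_def cells_def)+
  have min_f: "min_unblocked G f = m"
    using interval_free_cell_min_unblocked[OF assms] by (simp add: f_def)
  have "edge_of f = eT G w" using edge_of_eq[OF interval_free_cell_dim[OF adm]] by (simp add: f_def)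
  moreover have "f - {Vtx m, Edg (eT G w)} = R" using S by (auto simp: f_def R_def)
  moreover have "elred G (insert (Vtx w) S) m = insert (Edg (eT G m)) (insert (Vtx w) R)"
    using \<open>m \<noteq> w\<close> by (auto simp: elred_def R_def)
  ultimately show ?thesis
    unfolding f_def[symmetric] R_def[symmetric]
    using bword_eq[OF min_f mv] iota_tau_eT[OF w] by (simp add: insert_commute)
qed

lemma interval_free_cell_erasable:
  assumes "interval_free_cell n S w"
  shows "erasable G n (insert (Edg (eT G w)) S)"
  using assms
proof (induction "sum depth (insert w (Vtx -` S))" arbitrary: S w rule: less_induct)
  case less
  define f where "f = insert (Edg (eT G w)) S"
  define x where "x = insert (Vtx w) S"
  have S: "S \<subseteq> range Vtx" and fc: "f \<in> cells G n"
    using less.prems by (simp_all add: interval_free_cell_def f_def)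
  have xc: "x \<in> cells G n" and "Vtx w \<notin> S" "unblocked G x w"
    using interval_free_cell_vertex_face[OF less.prems] by (simp_all add: x_def)
  then obtain m where m: "unblocked G x m" and min: "\<forall>u. unblocked G x u \<longrightarrow> vle G m u"
    using exists_min_unblocked[OF xc] by blast
  have g3: "elred G x m \<in> TW G n"
    using vertex_cell_principal_reduction_collapsible[OF xc _ m min] S by (simp add: x_def)
  show ?case
  proof (cases "m = w")
    case True
    then have "elred G x m = f" using \<open>Vtx w \<notin> S\<close> by (auto simp: elred_def x_def f_def)
    then show ?thesis using collapsible_erasable[OF g3] by (simp add: f_def)
  next
    case False
    note boundary = less.prems m[unfolded x_def] min[unfolded x_def] False
    have ub: "unblocked G f m" using interval_free_cell_min_unblocked[OF boundary] by (simp add: f_def)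
    show ?thesis
    proof (cases "f \<in> TW G n")
      case True then show ?thesis by (simp add: collapsible_erasable f_def)
    next
      case False
      then have f_red: "f \<in> one_cells G n" "redundant G n f"
        using fc interval_free_cell_dim[OF less.prems] ub
        by (auto simp: f_def one_cells_def redundant_def has_pr_def TW_def collapsible_def)
      have "erasable G n (insert (Edg (eT G m)) (insert (Vtx (parent w)) (S - {Vtx m})))"
        by (rule less.hyps[OF interval_free_cell_boundary_depth_less(1)[OF boundary(1,2,4)]
              interval_free_cell_boundary(1)[OF boundary]])
      moreover have "erasable G n (insert (Edg (eT G w)) (insert (Vtx (parent m)) (S - {Vtx m})))"
        by (rule less.hyps[OF interval_free_cell_boundary_depth_less(2)[OF boundary(1,2,4)]
              interval_free_cell_boundary(2)[OF boundary]])
      ultimately show ?thesis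
        using redundant_erasable[OF f_red] interval_free_cell_bword[OF boundary]
          collapsible_erasable[OF g3]
        by (simp add: f_def x_def)
    qed
  qed
qed

lemma redundant_edge_face_erasable:
  assumes c: "c \<in> cells G n" "dim c = 1" and ub: "unblocked G c v" and e: "Edg e \<in> c"
    and y: "y \<in> endp G e"
    and free: "insert y (Vtx -` c - {v}) \<inter> vint G (parent v) v = {}"
  shows "erasable G n (insert (Edg (eT G v)) (insert (Vtx y) (c - {Vtx v, Edg e})))"
proof -
  have v: "v \<in> verts G" "v \<noteq> base G" using c ub by (fastforce simp: unblocked_def cells_def)+
  define R where "R = c - {Vtx v, Edg e}"
  have "e \<noteq> eT G v" using ub e eT_tree_edge[OF v] by (fastforce simp: unblocked_def)
  then have "insert (Vtx y) (elred G c v - {Edg e}) = insert (Edg (eT G v)) (insert (Vtx y) R)"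
    by (auto simp: elred_def R_def)
  moreover have "insert (Vtx y) (elred G c v - {Edg e}) \<in> cells G n"
    using face_in_cells[OF elred_in_cells[OF c(1) ub], of e y] e y \<open>e \<noteq> eT G v\<close>
    by (auto simp: elred_def)
  moreover have "R \<subseteq> range Vtx" using dim_one_remove_edge[OF c(2) e] by (auto simp: R_def)
  moreover have "Vtx -` insert (Vtx y) R \<inter> vint G (parent v) v = {}"
    using free by (auto simp: R_def)
  ultimately have "interval_free_cell n (insert (Vtx y) R) v"
    using v by (simp add: interval_free_cell_def)
  then show ?thesis unfolding R_def by (rule interval_free_cell_erasable)
qed

end

theorem mainTheorem15:
  fixes G :: "('v,'e) gdata" and n :: nat and c c' :: "('v,'e) cell" and v :: 'v and e :: 'e
  assumes "valid G"
    and "n \<ge> 1"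
    and "c \<in> cells G n" and "dim c = 1" and "redundant G n c"
    and "unblocked G c v" and "\<forall>u. unblocked G c u \<longrightarrow> vle G v u"
    and "Edg e \<in> c"
    and "c' = insert (Vtx (tau G (eT G v))) (c - {Vtx v})"
    and "vint G (tau G (eT G v)) v \<inter> ({u. Vtx u \<in> c \<and> u \<noteq> v} \<union> {iota G e, tau G e}) = {}"
  shows "(rw_step G n)\<^sup>*\<^sup>* [(c, True)] [(c', True)]"
proof -
  interpret valid_graph G by (rule valid_graph.intro) fact
  have v: "v \<in> verts G" "v \<noteq> base G" using assms(3,6) by (fastforce simp: unblocked_def cells_def)+
  have e: "e \<in> edges G" using assms(3,8) by (fastforce simp: cells_def)
  define R where "R = c - {Vtx v, Edg e}"
  let ?h = "\<lambda>y. insert (Edg (eT G v)) (insert (Vtx y) R)"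
  have h: "erasable G n (?h y)" if "y \<in> {iota G e, tau G e}" for y
  proof -
    have "insert y (Vtx -` c - {v}) \<inter> vint G (parent v) v = {}"
      using that assms(10) iota_tau_eT[OF v] by auto
    then show ?thesis unfolding R_def
      using redundant_edge_face_erasable[OF assms(3,4,6,8)] that iota_tau_in_endp[OF e] by blast
  qed
  have "([(c, True)], wrev (bword G c)) \<in> rels G n"
    using assms(3-5) by (auto simp: rels_def one_cells_def)
  then have "(rw_step G n)\<^sup>*\<^sup>* [(c, True)] (wrev (bword G c))" by (rule rels_rw_steps)
  also have "wrev (bword G c) = [(?h (iota G e), True)] @ [(c', True)] @ [(?h (tau G e), False)]"
    using bword_eq[OF min_unblocked_eqI[OF assms(3,6,7)] v edge_of_eq[OF assms(4,8)]]
      assms(6,8,9) iota_tau_eT[OF v]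
    by (auto simp: R_def wrev_def orev_def unblocked_def)
  also have "(rw_step G n)\<^sup>*\<^sup>* \<dots> [(c', True)]"
    by (rule rw_steps_erase_around) (use h in auto)
  finally show ?thesis .
qed

end
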